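(* Let $d\ge1$ and $1\le p\le q\le\infty$. Then the operator $$R_1f_0(r)=\chi_{[2,\infty)}(r)\sup_{t\in[1,2],\ t\le r/2}\int_{r-t}^{r+t}|f_0(s)|\,ds$$ is bounded from $L^p(\mu_d)$ to $L^q(\mu_d)$.
   Context: $\mu_d$ is the measure on $\mathbb{R}^+$ with $d\mu_d=r^{d-1}dr$. *)

theory Defs
  imports "HOL-Analysis.Analysis"
begin

definition mu :: "nat \<Rightarrow> real measure" where
  "mu d = density (restrict_space lborel {0<..}) (\<lambda>r. ennreal (r ^ (d - 1)))"

text \<open>L^p (quasi)norm of a nonnegative (ennreal-valued) function, p in [1,inf];
  value inf means the function is not in L^p.\<close>
definition lpnorm :: "'a measure \<Rightarrow> ennreal \<Rightarrow> ('a \<Rightarrow> ennreal) \<Rightarrow> ennreal" where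
  "lpnorm M p g =
     (if p = \<infinity> then Inf {c. AE x in M. g x \<le> c}
      else (let I = (\<integral>\<^sup>+ x. (if g x = \<infinity> then \<infinity> else ennreal (enn2real (g x) powr enn2real p)) \<partial>M)
            in if I = \<infinity> then \<infinity> else ennreal (enn2real I powr (1 / enn2real p))))"

definition R1 :: "(real \<Rightarrow> real) \<Rightarrow> real \<Rightarrow> ennreal" where
  "R1 f r = (if r \<ge> 2 then
       Sup ((\<lambda>t. \<integral>\<^sup>+ s. ennreal \<bar>f s\<bar> * indicator {r - t .. r + t} s \<partial>lborel)
              ` {t. 1 \<le> t \<and> t \<le> 2 \<and> t \<le> r / 2})
     else 0)"

end

theory Submission
  imports Defs "HOL-Probability.Essential_Supremum"
begin

text \<open>For \<open>r \<ge> 2\<close> every interval \<open>[r - t, r + t]\<close> in the supremum lies in the window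
  \<open>[max (r - 2) (r / 2), r + 2]\<close>, which has length at most \<open>4\<close> and lies in \<open>[1, \<infinity>)\<close>, where the
  weight \<open>r\<^sup>d\<^sup>-\<^sup>1\<close> is at least \<open>1\<close>. For \<open>p = \<infinity>\<close> this gives \<open>R\<^sub>1 f \<le> 4 \<parallel>f\<parallel>\<^sub>\<infinity>\<close> directly. For
  \<open>p = P < \<infinity>\<close>, Young's inequality bounds \<open>R\<^sub>1 f (r)\<close> by \<open>5\<close> times the \<open>L\<^sup>P\<close> norm of \<open>f\<close> on
  the window; this majorant is at most \<open>5 \<parallel>f\<parallel>\<^sub>p\<close> everywhere, and since a point \<open>s\<close> lies only in
  windows of centres \<open>r \<in> [s - 2, s + 2]\<close> with \<open>r \<le> 2 s\<close>, Tonelli's theorem bounds its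
  \<open>L\<^sup>P(\<mu>\<^sub>d)\<close> norm by \<open>20 \<cdot> 2\<^sup>d\<^sup>-\<^sup>1 \<parallel>f\<parallel>\<^sub>p\<close>. Finally a function bounded by \<open>B\<close> with \<open>L\<^sup>P\<close> norm at
  most \<open>A\<close> has \<open>L\<^sup>Q\<close> norm at most \<open>max A B\<close> for every \<open>Q \<ge> P\<close>.\<close>

lemma lpnorm_cong:
  assumes "\<And>x. x \<in> space M \<Longrightarrow> g x = g' x"
  shows "lpnorm M p g = lpnorm M p g'"
proof -
  have "(AE x in M. g x \<le> c) \<longleftrightarrow> (AE x in M. g' x \<le> c)" for c
    using assms by (intro AE_cong) auto
  moreover have "(\<integral>\<^sup>+ x. (if g x = \<infinity> then \<infinity> else ennreal (enn2real (g x) powr enn2real p)) \<partial>M)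
      = (\<integral>\<^sup>+ x. (if g' x = \<infinity> then \<infinity> else ennreal (enn2real (g' x) powr enn2real p)) \<partial>M)"
    using assms by (intro nn_integral_cong) auto
  ultimately show ?thesis
    unfolding lpnorm_def by simp
qed

lemma lpnorm_mono:
  assumes "\<And>x. g x \<le> g' x"
  shows "lpnorm M p g \<le> lpnorm M p g'"
proof (cases "p = \<infinity>")
  case True
  have "{c. AE x in M. g' x \<le> c} \<subseteq> {c. AE x in M. g x \<le> c}"
    by (auto elim!: eventually_mono intro: order_trans[OF assms])
  then show ?thesis
    using True unfolding lpnorm_def by (simp add: Inf_superset_mono)
next
  case False
  define I where "I g = (\<integral>\<^sup>+ x. (if g x = \<infinity> then \<infinity> else ennreal (enn2real (g x) powr enn2real p)) \<partial>M)"
    for g :: "_ \<Rightarrow> ennreal"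
  have "I g \<le> I g'"
    unfolding I_def
  proof (intro nn_integral_mono)
    fix x
    show "(if g x = \<infinity> then \<infinity> else ennreal (enn2real (g x) powr enn2real p))
        \<le> (if g' x = \<infinity> then \<infinity> else ennreal (enn2real (g' x) powr enn2real p))"
      using assms[of x] by (auto simp: top_unique less_top intro!: ennreal_leI powr_mono2 enn2real_mono)
  qed
  then have "I g' \<noteq> \<infinity> \<Longrightarrow> enn2real (I g) powr (1 / enn2real p) \<le> enn2real (I g') powr (1 / enn2real p)"
    by (intro powr_mono2 enn2real_mono) (auto simp: less_top)
  then show ?thesis
    using False \<open>I g \<le> I g'\<close> unfolding lpnorm_def I_def[symmetric]
    by (auto simp: Let_def top_unique intro: ennreal_leI)
qed

lemma lpnorm_top_eq_esssup:
  "g \<in> borel_measurable M \<Longrightarrow> lpnorm M \<infinity> g = esssup M g"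
  by (simp add: lpnorm_def esssup_eq_AE)

lemma lpnorm_top_le:
  "(\<And>x. g x \<le> c) \<Longrightarrow> lpnorm M \<infinity> g \<le> c"
  unfolding lpnorm_def by (auto intro: Inf_lower)

lemma lpnorm_ennreal:
  fixes h :: "'a \<Rightarrow> real"
  assumes "0 \<le> P" "\<And>x. 0 \<le> h x"
  shows "lpnorm M (ennreal P) (\<lambda>x. ennreal (h x)) =
    (let I = \<integral>\<^sup>+ x. ennreal (h x powr P) \<partial>M in
     if I = \<infinity> then \<infinity> else ennreal (enn2real I powr (1 / P)))"
  unfolding lpnorm_def using assms by (simp add: Let_def)

lemma lpnorm_le_ennreal_iff:
  fixes h :: "'a \<Rightarrow> real"
  assumes "0 < P" "\<And>x. 0 \<le> h x" "0 \<le> A"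
  shows "lpnorm M (ennreal P) (\<lambda>x. ennreal (h x)) \<le> ennreal A \<longleftrightarrow>
    (\<integral>\<^sup>+ x. ennreal (h x powr P) \<partial>M) \<le> ennreal (A powr P)"
proof (cases "(\<integral>\<^sup>+ x. ennreal (h x powr P) \<partial>M) = \<infinity>")
  case True
  then show ?thesis
    using assms by (simp add: lpnorm_ennreal top_unique)
next
  case False
  then obtain i where i: "(\<integral>\<^sup>+ x. ennreal (h x powr P) \<partial>M) = ennreal i" "0 \<le> i"
    by (cases "\<integral>\<^sup>+ x. ennreal (h x powr P) \<partial>M") auto
  have "i powr (1 / P) \<le> A \<longleftrightarrow> i \<le> A powr P"
  proof
    assume "i powr (1 / P) \<le> A"
    then have "(i powr (1 / P)) powr P \<le> A powr P"
      using assms by (intro powr_mono2) auto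
    then show "i \<le> A powr P"
      using assms i by (simp add: powr_powr)
  next
    assume "i \<le> A powr P"
    then have "i powr (1 / P) \<le> (A powr P) powr (1 / P)"
      using assms i by (intro powr_mono2) auto
    then show "i powr (1 / P) \<le> A"
      using assms by (simp add: powr_powr)
  qed
  then show ?thesis
    using assms i by (simp add: lpnorm_ennreal)
qed

lemma lpnorm_le_max_if_bounded:
  fixes h :: "'a \<Rightarrow> real"
  assumes [measurable]: "h \<in> borel_measurable M"
    and "0 < P" "P \<le> Q" "\<And>x. 0 \<le> h x" "\<And>x. h x \<le> B" "0 \<le> A"
    and "lpnorm M (ennreal P) (\<lambda>x. ennreal (h x)) \<le> ennreal A"
  shows "lpnorm M (ennreal Q) (\<lambda>x. ennreal (h x)) \<le> ennreal (max A B)"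
proof -
  define m where "m = max A B"
  have "0 \<le> B"
    using assms(4,5) order_trans by blast
  have hP: "(\<integral>\<^sup>+ x. ennreal (h x powr P) \<partial>M) \<le> ennreal (A powr P)"
    using assms lpnorm_le_ennreal_iff by blast
  have "h x powr Q \<le> B powr (Q - P) * h x powr P" for x
  proof -
    have "h x powr Q = h x powr (Q - P) * h x powr P"
      by (simp flip: powr_add)
    also have "\<dots> \<le> B powr (Q - P) * h x powr P"
      using assms by (intro mult_right_mono powr_mono2) auto
    finally show ?thesis .
  qed
  then have "(\<integral>\<^sup>+ x. ennreal (h x powr Q) \<partial>M) \<le> (\<integral>\<^sup>+ x. ennreal (B powr (Q - P)) * ennreal (h x powr P) \<partial>M)"
    by (intro nn_integral_mono) (simp flip: ennreal_mult)
  also have "\<dots> = ennreal (B powr (Q - P)) * (\<integral>\<^sup>+ x. ennreal (h x powr P) \<partial>M)"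
    by (rule nn_integral_cmult) measurable
  also have "\<dots> \<le> ennreal (B powr (Q - P)) * ennreal (A powr P)"
    using hP by (rule mult_left_mono) simp
  also have "\<dots> \<le> ennreal (m powr (Q - P) * m powr P)"
    using assms \<open>0 \<le> B\<close>
    by (simp add: m_def flip: ennreal_mult; intro ennreal_leI mult_mono powr_mono2) auto
  also have "\<dots> = ennreal (m powr Q)"
    by (simp flip: powr_add)
  finally show ?thesis
    using assms lpnorm_le_ennreal_iff[of Q h m M] unfolding m_def by auto
qed

lemma lpnorm_le_if_bounded:
  fixes h :: "'a \<Rightarrow> real"
  assumes "h \<in> borel_measurable M"
    and "0 < P" "ennreal P \<le> q" "\<And>x. 0 \<le> h x" "\<And>x. h x \<le> B" "B \<le> A"
    and "lpnorm M (ennreal P) (\<lambda>x. ennreal (h x)) \<le> ennreal A"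
  shows "lpnorm M q (\<lambda>x. ennreal (h x)) \<le> ennreal A"
proof -
  have "0 \<le> A"
    using assms(4-6) by (meson order_trans)
  show ?thesis
  proof (cases q)
    case (real Q)
    then have "P \<le> Q"
      using assms(3) by simp
    then have "lpnorm M q (\<lambda>x. ennreal (h x)) \<le> ennreal (max A B)"
      unfolding real by (rule lpnorm_le_max_if_bounded[OF assms(1,2) _ assms(4,5) \<open>0 \<le> A\<close> assms(7)])
    then show ?thesis
      using \<open>B \<le> A\<close> by (simp add: max_absorb1)
  next
    case top
    have "h x \<le> A" for x
      using assms(5,6) by (rule order_trans)
    then show ?thesis
      unfolding top infinity_ennreal_def[symmetric] by (intro lpnorm_top_le ennreal_leI)
  qed
qed

lemma le_add_powr:
  fixes x e P :: real
  assumes "0 \<le> x" "0 < e" "1 \<le> P"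
  shows "x \<le> e + e powr (1 - P) * x powr P"
proof (cases "x \<le> e")
  case True
  then show ?thesis by (simp add: add_increasing2)
next
  case False
  then have "0 < x"
    using assms by auto
  have "x * 1 \<le> x * (x / e) powr (P - 1)"
    using False assms by (intro mult_left_mono ge_one_powr_ge_zero) auto
  also have "\<dots> = e powr (1 - P) * x powr P"
    using \<open>0 < x\<close> assms by (simp add: powr_divide powr_diff field_simps powr_add)
  finally show ?thesis
    using assms by simp
qed

lemma nn_integral_indicator_le_powr:
  fixes g :: "'a \<Rightarrow> real"
  assumes [measurable]: "g \<in> borel_measurable M" "S \<in> sets M"
    and "\<And>x. 0 \<le> g x" "1 \<le> P" "0 \<le> A" "0 \<le> L" "emeasure M S \<le> ennreal L"
    and gP: "(\<integral>\<^sup>+ x. ennreal (g x powr P) * indicator S x \<partial>M) \<le> ennreal (A powr P)"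
  shows "(\<integral>\<^sup>+ x. ennreal (g x) * indicator S x \<partial>M) \<le> ennreal ((L + 1) * A)"
proof (cases "A = 0")
  case True
  then have "(\<integral>\<^sup>+ x. ennreal (g x powr P) * indicator S x \<partial>M) = 0"
    using gP by simp
  then have "AE x in M. ennreal (g x powr P) * indicator S x = 0"
    by (simp add: nn_integral_0_iff_AE)
  then have "AE x in M. ennreal (g x) * indicator S x = 0"
    by eventually_elim (use assms in \<open>auto simp: indicator_def split: if_splits\<close>)
  then have "(\<integral>\<^sup>+ x. ennreal (g x) * indicator S x \<partial>M) = 0"
    by (subst nn_integral_0_iff_AE) auto
  then show ?thesis
    by simp
next
  case False
  then have "0 < A"
    using assms by simp
  have "(\<integral>\<^sup>+ x. ennreal (g x) * indicator S x \<partial>M)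
      \<le> (\<integral>\<^sup>+ x. ennreal A * indicator S x + ennreal (A powr (1 - P)) * (ennreal (g x powr P) * indicator S x) \<partial>M)"
    using le_add_powr[OF assms(3) \<open>0 < A\<close> assms(4)] \<open>0 < A\<close>
    by (intro nn_integral_mono)
      (auto simp: indicator_def simp flip: ennreal_mult ennreal_plus intro!: ennreal_leI)
  also have "\<dots> = ennreal A * emeasure M S + ennreal (A powr (1 - P)) * (\<integral>\<^sup>+ x. ennreal (g x powr P) * indicator S x \<partial>M)"
    by (simp add: nn_integral_add nn_integral_cmult)
  also have "\<dots> \<le> ennreal A * ennreal L + ennreal (A powr (1 - P)) * ennreal (A powr P)"
    using assms by (intro add_mono mult_left_mono) auto
  also have "\<dots> = ennreal ((L + 1) * A)"
    using assms \<open>0 < A\<close> by (simp add: algebra_simps flip: ennreal_mult ennreal_plus powr_add)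
  finally show ?thesis .
qed

lemma borel_measurable_mu: "f \<in> borel_measurable borel \<Longrightarrow> f \<in> borel_measurable (mu d)"
  unfolding mu_def by (simp add: measurable_restrict_space1)

lemma space_mu [simp]: "space (mu d) = {0<..}"
  by (simp add: mu_def space_restrict_space)

lemma nn_integral_mu:
  assumes [measurable]: "u \<in> borel_measurable borel"
  shows "(\<integral>\<^sup>+ x. u x \<partial>mu d) = (\<integral>\<^sup>+ x. ennreal (x ^ (d - 1)) * u x * indicator {0<..} x \<partial>lborel)"
  unfolding mu_def
  apply (subst nn_integral_density)
    apply (rule measurable_restrict_space1, measurable)
   apply (rule measurable_restrict_space1, measurable)
  apply (simp add: nn_integral_restrict_space mult.assoc)
  done

lemma AE_mu_iff: "(AE x in mu d. P x) \<longleftrightarrow> (AE x in lborel. 0 < x \<longrightarrow> P x)"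
  unfolding mu_def
  apply (subst AE_density)
   apply (rule measurable_restrict_space1, measurable)
  apply (simp add: AE_restrict_space_iff)
  done

definition R1_window :: "real \<Rightarrow> real set" where
  "R1_window r = {max (r - 2) (r / 2) .. r + 2}"

lemma indicator_R1_window:
  "indicator (R1_window r) s = (if max (r - 2) (r / 2) \<le> s \<and> s \<le> r + 2 then 1 else 0)"
  by (simp add: R1_window_def indicator_def)

lemma R1_window_ge_one: "2 \<le> r \<Longrightarrow> s \<in> R1_window r \<Longrightarrow> 1 \<le> s"
  by (simp add: R1_window_def)

lemma emeasure_R1_window_le:
  assumes "2 \<le> r"
  shows "emeasure lborel (R1_window r) \<le> 4"
proof -
  have "emeasure lborel (R1_window r) = ennreal (r + 2 - max (r - 2) (r / 2))"
    using assms by (simp add: R1_window_def)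
  also have "\<dots> \<le> ennreal 4"
    by (rule ennreal_leI) linarith
  finally show ?thesis
    by simp
qed

lemma R1_le_nn_integral_R1_window:
  "2 \<le> r \<Longrightarrow> R1 f r \<le> (\<integral>\<^sup>+ s. ennreal \<bar>f s\<bar> * indicator (R1_window r) s \<partial>lborel)"
  unfolding R1_def R1_window_def
  by (auto intro!: SUP_least nn_integral_mono simp: indicator_def)

lemma R1_cong:
  assumes "\<And>s. 1 \<le> s \<Longrightarrow> \<bar>f s\<bar> = \<bar>g s\<bar>"
  shows "R1 f = R1 g"
proof
  fix r
  have "(\<integral>\<^sup>+ s. ennreal \<bar>f s\<bar> * indicator {r - t .. r + t} s \<partial>lborel)
      = (\<integral>\<^sup>+ s. ennreal \<bar>g s\<bar> * indicator {r - t .. r + t} s \<partial>lborel)" if "t \<le> r / 2" "2 \<le> r" for t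
    using that assms by (intro nn_integral_cong) (auto simp: indicator_def)
  then show "R1 f r = R1 g r"
    unfolding R1_def by (auto intro!: SUP_cong)
qed

lemma nn_integral_R1_window_le_mu:
  assumes [measurable]: "u \<in> borel_measurable borel" and "2 \<le> r"
  shows "(\<integral>\<^sup>+ s. u s * indicator (R1_window r) s \<partial>lborel) \<le> (\<integral>\<^sup>+ s. u s \<partial>mu d)"
  unfolding nn_integral_mu[OF assms(1)]
proof (intro nn_integral_mono)
  fix s
  show "u s * indicator (R1_window r) s \<le> ennreal (s ^ (d - 1)) * u s * indicator {0<..} s"
  proof (cases "s \<in> R1_window r")
    case True
    then have "1 \<le> s"
      using R1_window_ge_one assms(2) by blast
    then have "u s \<le> ennreal (s ^ (d - 1)) * u s"
      using mult_right_mono[of 1 "ennreal (s ^ (d - 1))" "u s"] by (simp add: one_le_power)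
    then show ?thesis
      using True \<open>1 \<le> s\<close> by simp
  qed simp
qed

lemma nn_integral_weight_R1_window_le:
  "(\<integral>\<^sup>+ r. ennreal (r ^ (d - 1)) * indicator {2..} r * indicator (R1_window r) s \<partial>lborel)
    \<le> ennreal (4 * 2 ^ (d - 1) * s ^ (d - 1)) * indicator {0<..} s"
proof -
  define c where "c = ennreal (2 ^ (d - 1) * s ^ (d - 1)) * indicator {0<..} s"
  have "(\<integral>\<^sup>+ r. ennreal (r ^ (d - 1)) * indicator {2..} r * indicator (R1_window r) s \<partial>lborel)
      \<le> (\<integral>\<^sup>+ r. c * indicator {s - 2 .. s + 2} r \<partial>lborel)"
  proof (intro nn_integral_mono)
    fix r
    show "ennreal (r ^ (d - 1)) * indicator {2..} r * indicator (R1_window r) s \<le> c * indicator {s - 2 .. s + 2} r"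
    proof (cases "2 \<le> r \<and> s \<in> R1_window r")
      case True
      then have "0 < s" "s - 2 \<le> r" "r \<le> s + 2" "r \<le> 2 * s"
        by (auto simp: R1_window_def)
      moreover have "r ^ (d - 1) \<le> 2 ^ (d - 1) * s ^ (d - 1)"
        using True \<open>r \<le> 2 * s\<close> power_mono[of r "2 * s" "d - 1"] by (simp add: power_mult_distrib)
      ultimately show ?thesis
        using True by (simp add: c_def ennreal_leI)
    qed auto
  qed
  also have "\<dots> = c * 4"
    by (simp add: nn_integral_cmult_indicator)
  also have "\<dots> = ennreal (4 * 2 ^ (d - 1) * s ^ (d - 1)) * indicator {0<..} s"
    by (simp add: c_def indicator_def ennreal_mult' mult_ac)
  finally show ?thesis .
qed

lemma nn_integral_mu_nn_integral_R1_window_le: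
  assumes [measurable]: "u \<in> borel_measurable borel"
  shows "(\<integral>\<^sup>+ r. indicator {2..} r * (\<integral>\<^sup>+ s. u s * indicator (R1_window r) s \<partial>lborel) \<partial>mu d)
    \<le> ennreal (4 * 2 ^ (d - 1)) * (\<integral>\<^sup>+ s. u s \<partial>mu d)"
proof -
  define G where "G r s = ennreal (r ^ (d - 1)) * indicator {2..} r * indicator (R1_window r) s * u s"
    for r s :: real
  have [measurable]: "case_prod G \<in> borel_measurable (lborel \<Otimes>\<^sub>M lborel)"
    "(\<lambda>(s, r). G r s) \<in> borel_measurable (lborel \<Otimes>\<^sub>M lborel)"
    unfolding G_def indicator_R1_window by measurable
  have [measurable]: "(\<lambda>r. \<integral>\<^sup>+ s. u s * indicator (R1_window r) s \<partial>lborel) \<in> borel_measurable borel"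
    unfolding indicator_R1_window by measurable
  have G_inner: "ennreal (r ^ (d - 1)) * (indicator {2..} r * (\<integral>\<^sup>+ s. u s * indicator (R1_window r) s \<partial>lborel))
      * indicator {0<..} r = (\<integral>\<^sup>+ s. G r s \<partial>lborel)" for r :: real
  proof -
    have "(\<integral>\<^sup>+ s. G r s \<partial>lborel)
        = (\<integral>\<^sup>+ s. (ennreal (r ^ (d - 1)) * indicator {2..} r) * (u s * indicator (R1_window r) s) \<partial>lborel)"
      unfolding G_def by (simp add: mult_ac)
    also have "\<dots> = ennreal (r ^ (d - 1)) * indicator {2..} r * (\<integral>\<^sup>+ s. u s * indicator (R1_window r) s \<partial>lborel)"
      unfolding indicator_R1_window by (rule nn_integral_cmult) measurable
    finally show ?thesis
      by (simp add: indicator_def)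
  qed
  have "(\<integral>\<^sup>+ r. indicator {2..} r * (\<integral>\<^sup>+ s. u s * indicator (R1_window r) s \<partial>lborel) \<partial>mu d)
      = (\<integral>\<^sup>+ r. (\<integral>\<^sup>+ s. G r s \<partial>lborel) \<partial>lborel)"
    by (subst nn_integral_mu) (measurable, simp only: G_inner)
  also have "\<dots> = (\<integral>\<^sup>+ s. (\<integral>\<^sup>+ r. G r s \<partial>lborel) \<partial>lborel)"
    by (intro lborel_pair.Fubini') measurable
  also have "\<dots> \<le> (\<integral>\<^sup>+ s. ennreal (4 * 2 ^ (d - 1)) * (ennreal (s ^ (d - 1)) * u s * indicator {0<..} s) \<partial>lborel)"
  proof (intro nn_integral_mono)
    fix s :: real
    have "(\<integral>\<^sup>+ r. G r s \<partial>lborel)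
        = (\<integral>\<^sup>+ r. ennreal (r ^ (d - 1)) * indicator {2..} r * indicator (R1_window r) s \<partial>lborel) * u s"
      unfolding G_def indicator_R1_window by (rule nn_integral_multc) measurable
    also have "\<dots> \<le> ennreal (4 * 2 ^ (d - 1) * s ^ (d - 1)) * indicator {0<..} s * u s"
      by (intro mult_right_mono nn_integral_weight_R1_window_le) simp
    finally show "(\<integral>\<^sup>+ r. G r s \<partial>lborel)
        \<le> ennreal (4 * 2 ^ (d - 1)) * (ennreal (s ^ (d - 1)) * u s * indicator {0<..} s)"
      by (cases "0 < s") (simp_all add: ennreal_mult mult_ac)
  qed
  also have "\<dots> = ennreal (4 * 2 ^ (d - 1)) * (\<integral>\<^sup>+ s. u s \<partial>mu d)"
    by (simp add: nn_integral_cmult nn_integral_mu)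
  finally show ?thesis .
qed

lemma R1_le_lpnorm_top:
  assumes [measurable]: "f \<in> borel_measurable borel"
  shows "R1 f r \<le> 4 * lpnorm (mu d) \<infinity> (\<lambda>s. ennreal \<bar>f s\<bar>)"
proof (cases "2 \<le> r")
  case True
  define E where "E = lpnorm (mu d) \<infinity> (\<lambda>s. ennreal \<bar>f s\<bar>)"
  have f_mu: "(\<lambda>s. ennreal \<bar>f s\<bar>) \<in> borel_measurable (mu d)"
    by (intro borel_measurable_mu) measurable
  have "AE s in mu d. ennreal \<bar>f s\<bar> \<le> E"
    unfolding E_def lpnorm_top_eq_esssup[OF f_mu] by (rule esssup_AE)
  then have "AE s in lborel. ennreal \<bar>f s\<bar> * indicator (R1_window r) s \<le> E * indicator (R1_window r) s"
    by (auto simp: AE_mu_iff indicator_def elim!: eventually_mono dest: R1_window_ge_one[OF True])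
  then have "(\<integral>\<^sup>+ s. ennreal \<bar>f s\<bar> * indicator (R1_window r) s \<partial>lborel)
      \<le> (\<integral>\<^sup>+ s. E * indicator (R1_window r) s \<partial>lborel)"
    by (rule nn_integral_mono_AE)
  with R1_le_nn_integral_R1_window[OF True]
  have "R1 f r \<le> (\<integral>\<^sup>+ s. E * indicator (R1_window r) s \<partial>lborel)"
    by (rule order_trans)
  also have "\<dots> = E * emeasure lborel (R1_window r)"
    by (simp add: R1_window_def nn_integral_cmult_indicator)
  also have "\<dots> \<le> E * 4"
    by (intro mult_left_mono emeasure_R1_window_le True) simp
  finally show ?thesis
    by (simp add: E_def mult.commute)
qed (simp add: R1_def)

(* The factor 5 is L + 1 in nn_integral_indicator_le_powr for the window length bound L = 4. *)
definition R1_majorant :: "real \<Rightarrow> (real \<Rightarrow> real) \<Rightarrow> real \<Rightarrow> real" where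
  "R1_majorant P f r = (if 2 \<le> r then
     5 * enn2real (\<integral>\<^sup>+ s. ennreal (\<bar>f s\<bar> powr P) * indicator (R1_window r) s \<partial>lborel) powr (1 / P)
   else 0)"

lemma borel_measurable_R1_majorant:
  assumes [measurable]: "f \<in> borel_measurable borel"
  shows "R1_majorant P f \<in> borel_measurable borel"
  unfolding R1_majorant_def indicator_R1_window by measurable

lemma R1_majorant_nonneg: "0 \<le> R1_majorant P f r"
  by (simp add: R1_majorant_def)

lemma R1_le_R1_majorant:
  assumes [measurable]: "f \<in> borel_measurable borel" and "1 \<le> P"
    and fin: "(\<integral>\<^sup>+ s. ennreal (\<bar>f s\<bar> powr P) \<partial>mu d) < \<infinity>"
  shows "R1 f r \<le> ennreal (R1_majorant P f r)"
proof (cases "2 \<le> r")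
  case True
  define a where "a = (\<integral>\<^sup>+ s. ennreal (\<bar>f s\<bar> powr P) * indicator (R1_window r) s \<partial>lborel)"
  have "a \<le> (\<integral>\<^sup>+ s. ennreal (\<bar>f s\<bar> powr P) \<partial>mu d)"
    unfolding a_def by (rule nn_integral_R1_window_le_mu[OF _ True]) measurable
  then have "a < \<infinity>"
    using fin by (rule le_less_trans)
  then have "a = ennreal ((enn2real a powr (1 / P)) powr P)"
    using assms(2) by (simp add: powr_powr less_top[symmetric])
  then have fP: "(\<integral>\<^sup>+ s. ennreal (\<bar>f s\<bar> powr P) * indicator (R1_window r) s \<partial>lborel)
      \<le> ennreal ((enn2real a powr (1 / P)) powr P)"
    unfolding a_def by (rule eq_refl)
  have "R1 f r \<le> (\<integral>\<^sup>+ s. ennreal \<bar>f s\<bar> * indicator (R1_window r) s \<partial>lborel)"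
    by (rule R1_le_nn_integral_R1_window[OF True])
  also have "\<dots> \<le> ennreal ((4 + 1) * enn2real a powr (1 / P))"
  proof (rule nn_integral_indicator_le_powr[OF _ _ _ assms(2) _ _ _ fP])
    show "(\<lambda>s. \<bar>f s\<bar>) \<in> borel_measurable lborel"
      by measurable
    show "R1_window r \<in> sets lborel"
      by (simp add: R1_window_def)
    show "emeasure lborel (R1_window r) \<le> ennreal 4"
      using emeasure_R1_window_le[OF True] by simp
  qed simp_all
  finally show ?thesis
    unfolding R1_majorant_def if_P[OF True] a_def by simp
qed (simp add: R1_def)

lemma R1_majorant_le:
  assumes [measurable]: "f \<in> borel_measurable borel" and "0 < P" "0 \<le> F"
    and F: "(\<integral>\<^sup>+ s. ennreal (\<bar>f s\<bar> powr P) \<partial>mu d) \<le> ennreal (F powr P)"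
  shows "R1_majorant P f r \<le> 5 * F"
proof (cases "2 \<le> r")
  case True
  define a where "a = enn2real (\<integral>\<^sup>+ s. ennreal (\<bar>f s\<bar> powr P) * indicator (R1_window r) s \<partial>lborel)"
  have "(\<integral>\<^sup>+ s. ennreal (\<bar>f s\<bar> powr P) * indicator (R1_window r) s \<partial>lborel) \<le> ennreal (F powr P)"
    by (rule order_trans[OF nn_integral_R1_window_le_mu[OF _ True] F]) measurable
  then have "a \<le> F powr P"
    unfolding a_def by (intro enn2real_leI) simp_all
  then have "a powr (1 / P) \<le> (F powr P) powr (1 / P)"
    using \<open>0 < P\<close> by (intro powr_mono2) (simp_all add: a_def)
  also have "\<dots> = F"
    using \<open>0 < P\<close> \<open>0 \<le> F\<close> by (simp add: powr_powr)
  finally show ?thesis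
    unfolding R1_majorant_def if_P[OF True] a_def[symmetric] by linarith
qed (use \<open>0 \<le> F\<close> in \<open>simp add: R1_majorant_def\<close>)

lemma lpnorm_R1_majorant_le:
  assumes [measurable]: "f \<in> borel_measurable borel" and "1 \<le> P" "0 \<le> F"
    and F: "(\<integral>\<^sup>+ s. ennreal (\<bar>f s\<bar> powr P) \<partial>mu d) \<le> ennreal (F powr P)"
  shows "lpnorm (mu d) (ennreal P) (\<lambda>r. ennreal (R1_majorant P f r)) \<le> ennreal (20 * 2 ^ (d - 1) * F)"
proof -
  define K :: real where "K = 4 * 2 ^ (d - 1)"
  define A where "A r = (\<integral>\<^sup>+ s. ennreal (\<bar>f s\<bar> powr P) * indicator (R1_window r) s \<partial>lborel)" for r
  have [measurable]: "A \<in> borel_measurable borel"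
    unfolding A_def indicator_R1_window by measurable
  have A_finite: "A r < \<infinity>" if "2 \<le> r" for r
  proof -
    have "A r \<le> ennreal (F powr P)"
      unfolding A_def by (rule order_trans[OF nn_integral_R1_window_le_mu[OF _ that] F]) measurable
    then show ?thesis
      by (rule le_less_trans) simp
  qed
  have majorant_powr: "ennreal (R1_majorant P f r powr P) = ennreal (5 powr P) * (indicator {2..} r * A r)" for r
  proof (cases "2 \<le> r")
    case True
    have "R1_majorant P f r powr P = 5 powr P * enn2real (A r)"
      using True \<open>1 \<le> P\<close> by (simp add: R1_majorant_def A_def powr_mult powr_powr)
    then show ?thesis
      using True A_finite[OF True] by (simp add: ennreal_mult less_top)
  qed (use \<open>1 \<le> P\<close> in \<open>simp add: R1_majorant_def\<close>)
  have "(1::real) \<le> 2 ^ (d - 1)"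
    by (rule one_le_power) simp
  then have "1 \<le> K"
    unfolding K_def by linarith
  then have "K \<le> K powr P"
    using powr_mono[OF \<open>1 \<le> P\<close>, of K] by simp
  have "(\<integral>\<^sup>+ r. ennreal (R1_majorant P f r powr P) \<partial>mu d)
      = ennreal (5 powr P) * (\<integral>\<^sup>+ r. indicator {2..} r * A r \<partial>mu d)"
    unfolding majorant_powr by (intro nn_integral_cmult borel_measurable_mu) measurable
  also have "\<dots> \<le> ennreal (5 powr P) * (ennreal K * ennreal (F powr P))"
    unfolding A_def K_def
    by (intro mult_left_mono order_trans[OF nn_integral_mu_nn_integral_R1_window_le] F) simp_all
  also have "\<dots> = ennreal (5 powr P * K * F powr P)"
    using \<open>1 \<le> K\<close> by (simp add: ennreal_mult mult.assoc)
  also have "\<dots> \<le> ennreal (5 powr P * K powr P * F powr P)"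
    using \<open>K \<le> K powr P\<close> by (intro ennreal_leI mult_right_mono mult_left_mono) simp_all
  also have "\<dots> = ennreal ((5 * K * F) powr P)"
    using \<open>1 \<le> K\<close> \<open>0 \<le> F\<close> by (simp add: powr_mult)
  also have "5 * K * F = 20 * 2 ^ (d - 1) * F"
    by (simp add: K_def)
  finally show ?thesis
    using assms lpnorm_le_ennreal_iff[of P "R1_majorant P f"] R1_majorant_nonneg by simp
qed

lemma lpnorm_R1_le_top:
  "f \<in> borel_measurable borel \<Longrightarrow>
    lpnorm (mu d) \<infinity> (R1 f) \<le> 4 * lpnorm (mu d) \<infinity> (\<lambda>s. ennreal \<bar>f s\<bar>)"
  by (intro lpnorm_top_le R1_le_lpnorm_top)

lemma lpnorm_R1_le_ennreal:
  assumes [measurable]: "f \<in> borel_measurable borel" and "1 \<le> P" "ennreal P \<le> q" "0 \<le> F"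
    and "lpnorm (mu d) (ennreal P) (\<lambda>s. ennreal \<bar>f s\<bar>) = ennreal F"
  shows "lpnorm (mu d) q (R1 f) \<le> ennreal (20 * 2 ^ (d - 1) * F)"
proof -
  have f_powr: "(\<integral>\<^sup>+ s. ennreal (\<bar>f s\<bar> powr P) \<partial>mu d) \<le> ennreal (F powr P)"
    using assms lpnorm_le_ennreal_iff[of P "\<lambda>s. \<bar>f s\<bar>" F "mu d"] by simp
  have "(1::real) \<le> 2 ^ (d - 1)"
    by (rule one_le_power) simp
  with \<open>0 \<le> F\<close> have "5 * F \<le> 20 * 2 ^ (d - 1) * F"
    by (intro mult_right_mono) linarith+
  have "lpnorm (mu d) q (R1 f) \<le> lpnorm (mu d) q (\<lambda>r. ennreal (R1_majorant P f r))"
    using f_powr \<open>1 \<le> P\<close>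
    by (intro lpnorm_mono R1_le_R1_majorant assms(1)) (auto intro: le_less_trans)
  also have "\<dots> \<le> ennreal (20 * 2 ^ (d - 1) * F)"
  proof (rule lpnorm_le_if_bounded[OF _ _ \<open>ennreal P \<le> q\<close> R1_majorant_nonneg])
    show "R1_majorant P f \<in> borel_measurable (mu d)"
      by (intro borel_measurable_mu borel_measurable_R1_majorant assms(1))
    show "R1_majorant P f r \<le> 5 * F" for r
      using R1_majorant_le[OF assms(1) _ \<open>0 \<le> F\<close> f_powr] \<open>1 \<le> P\<close> by simp
    show "lpnorm (mu d) (ennreal P) (\<lambda>r. ennreal (R1_majorant P f r)) \<le> ennreal (20 * 2 ^ (d - 1) * F)"
      by (rule lpnorm_R1_majorant_le[OF assms(1) \<open>1 \<le> P\<close> \<open>0 \<le> F\<close> f_powr])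
  qed (use \<open>1 \<le> P\<close> \<open>5 * F \<le> 20 * 2 ^ (d - 1) * F\<close> in simp_all)
  finally show ?thesis .
qed

lemma lpnorm_R1_le:
  assumes "f \<in> borel_measurable borel" and "1 \<le> p" "p \<le> q"
    and fin: "lpnorm (mu d) p (\<lambda>s. ennreal \<bar>f s\<bar>) < \<infinity>"
  shows "lpnorm (mu d) q (R1 f) \<le> ennreal (20 * 2 ^ (d - 1)) * lpnorm (mu d) p (\<lambda>s. ennreal \<bar>f s\<bar>)"
proof (cases p)
  case (real P)
  moreover obtain F where "lpnorm (mu d) p (\<lambda>s. ennreal \<bar>f s\<bar>) = ennreal F" "0 \<le> F"
    using fin by (cases "lpnorm (mu d) p (\<lambda>s. ennreal \<bar>f s\<bar>)") auto
  ultimately show ?thesis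
    using assms lpnorm_R1_le_ennreal[of f P q F d] by (simp add: ennreal_mult)
next
  case top
  then have "p = \<infinity>" "q = \<infinity>"
    using \<open>p \<le> q\<close> by (simp_all add: top_unique)
  have "(1::real) \<le> 2 ^ (d - 1)"
    by (rule one_le_power) simp
  then have "4 \<le> 20 * (2::real) ^ (d - 1)"
    by linarith
  then have "(4::ennreal) \<le> ennreal (20 * 2 ^ (d - 1))"
    using ennreal_leI by fastforce
  have "lpnorm (mu d) q (R1 f) \<le> 4 * lpnorm (mu d) p (\<lambda>s. ennreal \<bar>f s\<bar>)"
    unfolding \<open>p = \<infinity>\<close> \<open>q = \<infinity>\<close> by (rule lpnorm_R1_le_top[OF assms(1)])
  also have "\<dots> \<le> ennreal (20 * 2 ^ (d - 1)) * lpnorm (mu d) p (\<lambda>s. ennreal \<bar>f s\<bar>)"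
    using \<open>4 \<le> ennreal (20 * 2 ^ (d - 1))\<close> by (rule mult_right_mono) simp
  finally show ?thesis .
qed

theorem lemma2p2:
  fixes d :: nat and p q :: ennreal
  assumes "d \<ge> 1" and "1 \<le> p" and "p \<le> q"
  shows "\<exists>C::real. C \<ge> 0 \<and>
    (\<forall>f::real \<Rightarrow> real. f \<in> borel_measurable (mu d) \<longrightarrow>
       lpnorm (mu d) p (\<lambda>r. ennreal \<bar>f r\<bar>) < \<infinity> \<longrightarrow>
       lpnorm (mu d) q (R1 f) \<le> ennreal C * lpnorm (mu d) p (\<lambda>r. ennreal \<bar>f r\<bar>))"
proof (intro exI[of _ "20 * 2 ^ (d - 1)"] conjI allI impI)
  show "0 \<le> (20 * 2 ^ (d - 1) :: real)"
    by simp
  fix f :: "real \<Rightarrow> real"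
  assume f: "f \<in> borel_measurable (mu d)" and fin: "lpnorm (mu d) p (\<lambda>r. ennreal \<bar>f r\<bar>) < \<infinity>"
  define g where "g s = indicator {0<..} s *\<^sub>R f s" for s
  have "g \<in> borel_measurable borel"
    using f unfolding g_def mu_def by (simp add: borel_measurable_restrict_space_iff)
  moreover have "R1 f = R1 g"
    by (rule R1_cong) (simp add: g_def)
  moreover have "lpnorm (mu d) p (\<lambda>r. ennreal \<bar>f r\<bar>) = lpnorm (mu d) p (\<lambda>r. ennreal \<bar>g r\<bar>)"
    by (rule lpnorm_cong) (simp add: g_def)
  ultimately show "lpnorm (mu d) q (R1 f) \<le> ennreal (20 * 2 ^ (d - 1)) * lpnorm (mu d) p (\<lambda>r. ennreal \<bar>f r\<bar>)"
    using lpnorm_R1_le[of g p q d] assms fin by simp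
qed

end
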